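(* Let $N\in\mathbb{N}$, $\Lambda\subseteq P_N$, $N(\Lambda):=N-|\Lambda|$. (i) For any $\lambda\subseteq P_{N(\Lambda)}$, $\pi_\lambda\circ\pi_\Lambda=\pi_{\varphi(\lambda)\cup\Lambda}$, where $\varphi$ is the unique strictly increasing bijection $P_{N(\Lambda)}\to P_N\smallsetminus\Lambda$. (ii) $\pi_\Lambda:\mathbb{D}_N\to\mathbb{D}_{N(\Lambda)}$ is surjective, and its restriction to $\mathcal{D}_N$ induces a continuous surjective map $\pi_\Lambda:\mathcal{D}_N\to\mathcal{D}_{N(\Lambda)}$ that sends $\{(w,a,\theta)\in\mathcal{D}_N: a^{-1}[0]=\Lambda\}$ onto $\mathcal{D}^\circ_{N(\Lambda)}$. (iii) The function $\mathrm{Re}[\pi]:\mathbb{D}_N\to\mathbb{R}$, $\mathrm{Re}[\pi](w,a,\theta):=\mathrm{Re}(\pi(w,a,\theta))$, is continuous and surjective.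
   Context: $\mathbb{N}=\{0,1,\dots\}$, $P_N=\{1,\dots,N\}$ ($P_0=\emptyset$); vectors $v\in\mathbb{C}^N$ are functions on $P_N$, $v^{-1}[S]=\{\ell:v_\ell\in S\}$; $\mathrm{Tr}(v,\Lambda):=\sum_{\ell\in\Lambda}v_\ell$. $\mathcal{C}:=\{z:\mathrm{Re}(z)>0\text{ or }z\in i\mathbb{R}_{>0}\}$, $\mathcal{C}^\circ$ the open right half-plane, $\mathbb{R}^*=\mathbb{R}\smallsetminus\{0\}$. For $N\ge1$: $\mathbb{D}_N:=\{(w,a,\theta)\in\mathbb{C}\times\mathbb{C}^N\times\mathbb{R}^N:a^{-1}[0]\subseteq\theta^{-1}[\mathbb{R}\smallsetminus\mathbb{Z}]\}$, $\pi(w,a,\theta):=w-\mathrm{Tr}(a,a^{-1}[-\mathcal{C}])$, $\mathcal{D}_N:=\{(w,a,\theta)\in\mathbb{D}_N:\pi(w,a,\theta)\in\mathcal{C}^\circ,\ a\in(\mathbb{C}\smallsetminus i\mathbb{R}^* )^N\}$, and $\mathcal{D}_N^\circ$ is its interior. For $N=0$: $\mathbb{D}_0:=\mathbb{C}$, $\mathcal{D}_0:=\{w:\mathrm{Re}(w)>0\}$ (open). Projections $\pi_\Lambda=\pi_{\Lambda,N}:\mathbb{D}_N\to\mathbb{D}_{N(\Lambda)}$: if $\Lambda=\emptyset$, the identity; if $\Lambda=P_N\ne\emptyset$, $\pi_\Lambda=\pi$; if $\Lambda$ is a nonempty proper subset, $\pi_\Lambda(w,a,\theta):=(w-\mathrm{Tr}(a,\Lambda\cap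 a^{-1}[-\mathcal{C}]),\hat a_\Lambda,\hat\theta_\Lambda)$, where $\hat v_\Lambda:=v\circ\varphi\in\mathbb{C}^{N(\Lambda)}$ with $\varphi$ the strictly increasing bijection $P_{N(\Lambda)}\to P_N\smallsetminus\Lambda$. *)

theory Defs
  imports "HOL-Analysis.Analysis"
begin

text \<open>Points of \<open>\<complex> \<times> \<complex>^N \<times> \<real>^N\<close> are represented as triples \<open>(w, a, \<theta>)\<close> with
  \<open>a :: nat \<Rightarrow> complex\<close>, \<open>\<theta> :: nat \<Rightarrow> real\<close> vanishing outside \<open>P_N = {1..N}\<close>.
  The topology is the (product) topology of the ambient type; for N = 0 the
  vectors are the zero functions, so triples \<open>(w,0,0)\<close> represent \<open>\<complex>\<close>.\<close>

definition PN :: "nat \<Rightarrow> nat set" where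
  "PN N = {1..N}"

definition ambient :: "nat \<Rightarrow> (complex \<times> (nat \<Rightarrow> complex) \<times> (nat \<Rightarrow> real)) set" where
  "ambient N = {(w, a, \<theta>). (\<forall>l. l \<notin> PN N \<longrightarrow> a l = 0) \<and> (\<forall>l. l \<notin> PN N \<longrightarrow> \<theta> l = 0)}"

definition Ccone :: "complex set" where
  "Ccone = {z. Re z > 0 \<or> (Re z = 0 \<and> Im z > 0)}"

definition Tr :: "(nat \<Rightarrow> complex) \<Rightarrow> nat set \<Rightarrow> complex" where
  "Tr v L = (\<Sum>l\<in>L. v l)"

definition preimg :: "nat \<Rightarrow> (nat \<Rightarrow> 'a) \<Rightarrow> 'a set \<Rightarrow> nat set" where
  "preimg N v S = {l \<in> PN N. v l \<in> S}"

definition DD :: "nat \<Rightarrow> (complex \<times> (nat \<Rightarrow> complex) \<times> (nat \<Rightarrow> real)) set" where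
  "DD N = {(w, a, \<theta>). (w, a, \<theta>) \<in> ambient N \<and>
      preimg N a {0} \<subseteq> preimg N \<theta> (- \<int>)}"

definition pimap :: "nat \<Rightarrow> complex \<times> (nat \<Rightarrow> complex) \<times> (nat \<Rightarrow> real) \<Rightarrow> complex" where
  "pimap N x = (case x of (w, a, \<theta>) \<Rightarrow> w - Tr a (preimg N a (uminus ` Ccone)))"

definition Dcal :: "nat \<Rightarrow> (complex \<times> (nat \<Rightarrow> complex) \<times> (nat \<Rightarrow> real)) set" where
  "Dcal N = {(w, a, \<theta>). (w, a, \<theta>) \<in> DD N \<and> Re (pimap N (w, a, \<theta>)) > 0 \<and>
      (\<forall>l\<in>PN N. \<not> (Re (a l) = 0 \<and> Im (a l) \<noteq> 0))}"

definition Dint :: "nat \<Rightarrow> (complex \<times> (nat \<Rightarrow> complex) \<times> (nat \<Rightarrow> real)) set" where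
  "Dint N = (subtopology euclidean (ambient N)) interior_of (Dcal N)"

definition phi :: "nat \<Rightarrow> nat set \<Rightarrow> nat \<Rightarrow> nat" where
  "phi N L k = sorted_list_of_set (PN N - L) ! (k - 1)"

definition hat :: "nat \<Rightarrow> nat set \<Rightarrow> (nat \<Rightarrow> 'a::zero) \<Rightarrow> (nat \<Rightarrow> 'a)" where
  "hat N L v = (\<lambda>k. if k \<in> PN (N - card L) then v (phi N L k) else 0)"

definition piL :: "nat \<Rightarrow> nat set \<Rightarrow> complex \<times> (nat \<Rightarrow> complex) \<times> (nat \<Rightarrow> real)
    \<Rightarrow> complex \<times> (nat \<Rightarrow> complex) \<times> (nat \<Rightarrow> real)" where
  "piL N L x = (if L = {} then x
     else if L = PN N then (pimap N x, (\<lambda>_. 0), (\<lambda>_. 0))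
     else (case x of (w, a, \<theta>) \<Rightarrow>
       (w - Tr a (L \<inter> preimg N a (uminus ` Ccone)), hat N L a, hat N L \<theta>)))"

end

theory Submission
  imports Defs
begin

text \<open>Away from \<open>\<Lambda>\<close>, \<open>\<pi>\<^sub>\<Lambda>\<close> reindexes \<open>a\<close> and \<open>\<theta>\<close> along the increasing
  enumeration \<open>\<phi>\<close> of \<open>P_N - \<Lambda>\<close>; on \<open>\<Lambda>\<close> it moves the coordinates of \<open>a\<close> lying in
  \<open>-\<C>\<close> into \<open>w\<close>. As \<open>\<phi>\<close> is characterised by monotonicity, composing two such
  enumerations gives the enumeration for \<open>\<phi>(\<lambda>) \<union> \<Lambda>\<close>, whence (i).
  The surjectivity statements all come from one explicit section of \<open>\<pi>\<^sub>\<Lambda>\<close>, which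
  puts the reduced coordinates back along \<open>\<phi>\<close> and sets \<open>a = 0\<close>, \<open>\<theta> = 1/2\<close> on \<open>\<Lambda>\<close>.
  On \<open>\<D>_N\<close> every coordinate of \<open>a\<close> vanishes or has nonzero real part, which makes
  the subtracted trace continuous there and shows that the interior of \<open>\<D>_M\<close> consists
  of the points whose coordinates \<open>a\<^sub>k\<close> all have nonzero real part.
  Part (iii) rests on \<open>Re \<pi> = Re w - \<Sum>\<^sub>l min (Re a\<^sub>l) 0\<close>.\<close>

lemma finite_PN [simp]: "finite (PN N)" and card_PN [simp]: "card (PN N) = N"
  by (auto simp: PN_def)

lemma card_PN_Diff: "L \<subseteq> PN N \<Longrightarrow> card (PN N - L) = N - card L"
  by (simp add: card_Diff_subset finite_subset)

lemma strict_mono_on_eq_nth_sorted_list_of_set: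
  fixes f :: "nat \<Rightarrow> nat"
  assumes mono: "strict_mono_on {1..m} f" and k: "k \<in> {1..m}"
  shows "f k = sorted_list_of_set (f ` {1..m}) ! (k - 1)"
proof -
  define ys where "ys = map (\<lambda>i. f (Suc i)) [0..<m]"
  have "inj_on f {1..m}" using mono strict_mono_on_imp_inj_on by blast
  then have "length ys = card (f ` {1..m})" by (simp add: ys_def card_image)
  moreover have "sorted_wrt (<) ys"
    unfolding sorted_wrt_iff_nth_less ys_def by (auto intro!: strict_mono_onD[OF mono])
  moreover have "set ys = f ` {1..m}"
  proof -
    have "set ys = f ` Suc ` {0..<m}" by (simp only: ys_def set_map set_upt image_image)
    then show ?thesis by (simp add: atLeastLessThanSuc_atLeastAtMost)
  qed
  ultimately have "sorted_list_of_set (f ` {1..m}) = ys"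
    using sorted_list_of_set_unique[of "f ` {1..m}" ys] by simp
  moreover have "k - 1 < m" "Suc (k - 1) = k" using k by auto
  ultimately show ?thesis by (simp add: ys_def)
qed

lemma phi_in_PN_Diff:
  assumes "L \<subseteq> PN N" "k \<in> PN (N - card L)"
  shows "phi N L k \<in> PN N - L"
proof -
  have "k - 1 < length (sorted_list_of_set (PN N - L))"
    using assms card_PN_Diff[OF assms(1)] by (auto simp: PN_def)
  then show ?thesis unfolding phi_def
    by (metis finite_Diff finite_PN nth_mem set_sorted_list_of_set)
qed

lemma strict_mono_on_phi:
  assumes "L \<subseteq> PN N"
  shows "strict_mono_on (PN (N - card L)) (phi N L)"
proof (rule strict_mono_onI)
  fix r s assume "r \<in> PN (N - card L)" "s \<in> PN (N - card L)" "r < s"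
  then have "s - 1 < length (sorted_list_of_set (PN N - L))" "r - 1 < s - 1"
    using card_PN_Diff[OF assms] by (auto simp: PN_def)
  then show "phi N L r < phi N L s" unfolding phi_def
    using sorted_wrt_nth_less[OF strict_sorted_list_of_set] by blast
qed

lemma inj_on_phi: "L \<subseteq> PN N \<Longrightarrow> inj_on (phi N L) (PN (N - card L))"
  using strict_mono_on_phi strict_mono_on_imp_inj_on by blast

lemma phi_image:
  assumes "L \<subseteq> PN N"
  shows "phi N L ` PN (N - card L) = PN N - L"
proof
  show "phi N L ` PN (N - card L) \<subseteq> PN N - L" using phi_in_PN_Diff[OF assms] by auto
  show "PN N - L \<subseteq> phi N L ` PN (N - card L)"
  proof
    fix j assume "j \<in> PN N - L"
    then obtain i where i: "i < length (sorted_list_of_set (PN N - L))"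
      "sorted_list_of_set (PN N - L) ! i = j"
      by (metis finite_Diff finite_PN in_set_conv_nth set_sorted_list_of_set)
    then have "Suc i \<in> PN (N - card L)" "phi N L (Suc i) = j"
      using card_PN_Diff[OF assms] by (auto simp: PN_def phi_def)
    then show "j \<in> phi N L ` PN (N - card L)" by force
  qed
qed

lemma phi_unique:
  assumes "L \<subseteq> PN N" "strict_mono_on (PN m) f" "f ` PN m = PN N - L" "k \<in> PN m"
  shows "f k = phi N L k"
  using strict_mono_on_eq_nth_sorted_list_of_set[of m f k] assms
  by (simp add: PN_def phi_def)

lemma phi_empty: "k \<in> PN N \<Longrightarrow> phi N {} k = k"
  using phi_unique[of "{}" N N "\<lambda>k. k" k] by (auto simp: strict_mono_on_def)

lemma phi_image_Un_subset:
  assumes L: "L \<subseteq> PN N" and l: "l \<subseteq> PN (N - card L)"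
  shows "phi N L ` l \<union> L \<subseteq> PN N"
proof -
  have "phi N L ` l \<subseteq> PN N - L" using phi_in_PN_Diff[OF L] l by auto
  then show ?thesis using L by auto
qed

lemma card_phi_image_Un:
  assumes L: "L \<subseteq> PN N" and l: "l \<subseteq> PN (N - card L)"
  shows "card (phi N L ` l \<union> L) = card l + card L"
proof -
  have "finite l" "finite L" using l L by (auto intro: finite_subset[OF _ finite_PN])
  then have "card (phi N L ` l \<union> L) = card (phi N L ` l) + card L"
    using phi_in_PN_Diff[OF L] l by (intro card_Un_disjoint) auto
  also have "card (phi N L ` l) = card l"
    using inj_on_subset[OF inj_on_phi[OF L] l] by (rule card_image)
  finally show ?thesis .
qed

lemma phi_phi:
  assumes L: "L \<subseteq> PN N" and l: "l \<subseteq> PN (N - card L)"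
    and k: "k \<in> PN (N - card L - card l)"
  shows "phi N L (phi (N - card L) l k) = phi N (phi N L ` l \<union> L) k"
proof -
  let ?M = "N - card L"
  have "strict_mono_on (PN (?M - card l)) (\<lambda>k. phi N L (phi ?M l k))"
  proof (rule strict_mono_onI)
    fix r s assume "r \<in> PN (?M - card l)" "s \<in> PN (?M - card l)" "r < s"
    then have "phi ?M l r \<in> PN ?M" "phi ?M l s \<in> PN ?M" "phi ?M l r < phi ?M l s"
      using phi_in_PN_Diff[OF l] strict_mono_onD[OF strict_mono_on_phi[OF l]] by auto
    then show "phi N L (phi ?M l r) < phi N L (phi ?M l s)"
      using strict_mono_onD[OF strict_mono_on_phi[OF L]] by blast
  qed
  moreover have "(\<lambda>k. phi N L (phi ?M l k)) ` PN (?M - card l) = PN N - (phi N L ` l \<union> L)"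
  proof -
    have "(\<lambda>k. phi N L (phi ?M l k)) ` PN (?M - card l) = phi N L ` phi ?M l ` PN (?M - card l)"
      by (simp only: image_image)
    also have "\<dots> = phi N L ` (PN ?M - l)" by (simp only: phi_image[OF l])
    also have "\<dots> = PN N - (phi N L ` l \<union> L)"
      using inj_on_phi[OF L] l by (auto simp: inj_on_image_set_diff phi_image[OF L])
    finally show ?thesis .
  qed
  ultimately show ?thesis by (rule phi_unique[OF phi_image_Un_subset[OF L l] _ _ k])
qed

type_synonym point = "complex \<times> (nat \<Rightarrow> complex) \<times> (nat \<Rightarrow> real)"

text \<open>The generic case of \<open>piL\<close>; its special cases \<open>\<Lambda> = {}\<close> and \<open>\<Lambda> = P_N\<close> are instances.\<close>
definition proj :: "nat \<Rightarrow> nat set \<Rightarrow> point \<Rightarrow> point" where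
  "proj N L x = (case x of (w, a, \<theta>) \<Rightarrow>
       (w - Tr a (L \<inter> preimg N a (uminus ` Ccone)), hat N L a, hat N L \<theta>))"

lemma hat_empty: "(\<And>l. l \<notin> PN N \<Longrightarrow> v l = 0) \<Longrightarrow> hat N {} v = v"
  by (auto simp: hat_def phi_empty)

lemma hat_PN: "hat N (PN N) v = (\<lambda>_. 0)"
  by (auto simp: hat_def PN_def)

lemma piL_eq_proj: "L \<subseteq> PN N \<Longrightarrow> x \<in> ambient N \<Longrightarrow> piL N L x = proj N L x"
  by (auto simp: piL_def proj_def ambient_def hat_empty hat_PN pimap_def Tr_def preimg_def
      split: prod.splits intro!: arg_cong[where f="sum _"])

lemma proj_in_ambient: "proj N L x \<in> ambient (N - card L)"
  by (auto simp: proj_def ambient_def hat_def split: prod.splits)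

lemma hat_hat:
  assumes L: "L \<subseteq> PN N" and l: "l \<subseteq> PN (N - card L)"
  shows "hat (N - card L) l (hat N L v) = hat N (phi N L ` l \<union> L) v"
proof
  fix k
  have "card l \<le> N - card L" using card_mono[OF finite_PN l] by simp
  then have card: "N - card (phi N L ` l \<union> L) = N - card L - card l"
    using card_phi_image_Un[OF L l] by simp
  show "hat (N - card L) l (hat N L v) k = hat N (phi N L ` l \<union> L) v k"
  proof (cases "k \<in> PN (N - card L - card l)")
    case True
    then have "phi (N - card L) l k \<in> PN (N - card L)" using phi_in_PN_Diff[OF l] by auto
    then show ?thesis using True by (simp add: hat_def card phi_phi[OF L l])
  qed (simp add: hat_def card)
qed

lemma Tr_hat:
  assumes L: "L \<subseteq> PN N" and l: "l \<subseteq> PN (N - card L)"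
  shows "Tr (hat N L a) (l \<inter> preimg (N - card L) (hat N L a) S)
    = Tr a (phi N L ` l \<inter> preimg N a S)"
proof -
  have "l \<inter> preimg (N - card L) (hat N L a) S = {k \<in> l. a (phi N L k) \<in> S}"
    using l by (auto simp: preimg_def hat_def)
  then have "Tr (hat N L a) (l \<inter> preimg (N - card L) (hat N L a) S)
      = (\<Sum>k\<in>{k \<in> l. a (phi N L k) \<in> S}. a (phi N L k))"
    unfolding Tr_def using l by (intro sum.cong) (auto simp: hat_def)
  also have "\<dots> = (\<Sum>j\<in>phi N L ` {k \<in> l. a (phi N L k) \<in> S}. a j)"
    using inj_on_subset[OF inj_on_phi[OF L], of "{k \<in> l. a (phi N L k) \<in> S}"] l
    by (subst sum.reindex) auto
  also have "phi N L ` {k \<in> l. a (phi N L k) \<in> S} = phi N L ` l \<inter> preimg N a S"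
    using phi_in_PN_Diff[OF L] l by (auto simp: preimg_def)
  finally show ?thesis by (simp add: Tr_def)
qed

lemma proj_proj:
  assumes L: "L \<subseteq> PN N" and l: "l \<subseteq> PN (N - card L)"
  shows "proj (N - card L) l (proj N L x) = proj N (phi N L ` l \<union> L) x"
proof -
  obtain w a \<theta> where x: "x = (w, a, \<theta>)" by (cases x)
  let ?S = "preimg N a (uminus ` Ccone)"
  have "finite l" "finite L" using l L by (auto intro: finite_subset[OF _ finite_PN])
  then have "Tr a ((phi N L ` l \<union> L) \<inter> ?S) = Tr a (L \<inter> ?S) + Tr a (phi N L ` l \<inter> ?S)"
    unfolding Tr_def Int_Un_distrib2 using phi_in_PN_Diff[OF L] l
    by (subst sum.union_disjoint) auto
  then show ?thesis
    by (simp add: proj_def x Tr_hat[OF L l] hat_hat[OF L l] algebra_simps)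
qed

lemma pimap_eq_proj: "pimap N x = fst (proj N (PN N) x)"
  by (auto simp: pimap_def proj_def preimg_def split: prod.splits
      intro!: arg_cong[where f="Tr _"])

lemma pimap_proj: "L \<subseteq> PN N \<Longrightarrow> pimap (N - card L) (proj N L x) = pimap N x"
  using proj_proj[of L N "PN (N - card L)"] phi_image[of L N]
  by (simp add: pimap_eq_proj Un_absorb2)

lemma piL_piL:
  assumes L: "L \<subseteq> PN N" and l: "l \<subseteq> PN (N - card L)" and x: "x \<in> ambient N"
  shows "piL (N - card L) l (piL N L x) = piL N (phi N L ` l \<union> L) x"
  using proj_proj[OF L l] x
  by (simp add: piL_eq_proj[OF L x] piL_eq_proj[OF l proj_in_ambient]
      piL_eq_proj[OF phi_image_Un_subset[OF L l] x])

lemma DD_subset_ambient: "DD N \<subseteq> ambient N"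
  by (auto simp: DD_def)

lemma Dcal_subset_DD: "Dcal N \<subseteq> DD N"
  by (auto simp: Dcal_def)

lemma Dcal_Re_eq_0_imp_eq_0: "(w, a, \<theta>) \<in> Dcal N \<Longrightarrow> Re (a j) = 0 \<Longrightarrow> a j = 0"
  by (cases "j \<in> PN N") (auto simp: Dcal_def DD_def ambient_def complex_eq_iff)

lemma PN_cases_phi:
  assumes "L \<subseteq> PN N" "j \<in> PN N"
  obtains "j \<in> L" | k where "k \<in> PN (N - card L)" "j = phi N L k"
  using phi_image[OF assms(1)] assms(2) by blast

definition spread :: "nat \<Rightarrow> nat set \<Rightarrow> (nat \<Rightarrow> 'a) \<Rightarrow> 'a \<Rightarrow> nat \<Rightarrow> 'a::zero" where
  "spread N L v c j = (if j \<in> PN N - L then v (inv_into (PN (N - card L)) (phi N L) j)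
     else if j \<in> L then c else 0)"

lemma spread_phi: "L \<subseteq> PN N \<Longrightarrow> k \<in> PN (N - card L) \<Longrightarrow> spread N L v c (phi N L k) = v k"
  using phi_in_PN_Diff inv_into_f_f[OF inj_on_phi] by (simp add: spread_def)

lemma spread_in: "j \<in> L \<Longrightarrow> spread N L v c j = c"
  by (simp add: spread_def)

lemma hat_spread:
  assumes "L \<subseteq> PN N" "\<And>k. k \<notin> PN (N - card L) \<Longrightarrow> v k = 0"
  shows "hat N L (spread N L v c) = v"
  using assms by (auto simp: hat_def spread_phi)

text \<open>Putting \<open>\<theta> = 1/2\<close> on \<open>\<Lambda>\<close>, where the lifted \<open>a\<close> vanishes, keeps lifts inside \<open>DD N\<close>.\<close>
definition lift :: "nat \<Rightarrow> nat set \<Rightarrow> point \<Rightarrow> point" where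
  "lift N L y = (case y of (w, b, \<eta>) \<Rightarrow> (w, spread N L b 0, spread N L \<eta> (1/2)))"

lemma lift_in_ambient: "L \<subseteq> PN N \<Longrightarrow> lift N L y \<in> ambient N"
  by (auto simp: lift_def spread_def ambient_def split: prod.splits)

lemma proj_lift:
  assumes L: "L \<subseteq> PN N" and y: "y \<in> ambient (N - card L)"
  shows "proj N L (lift N L y) = y"
proof -
  obtain w b \<eta> where yy: "y = (w, b, \<eta>)" by (cases y)
  have "Tr (spread N L b 0) (L \<inter> S) = 0" for S
    unfolding Tr_def by (intro sum.neutral) (simp add: spread_in)
  then show ?thesis
    using y by (simp add: proj_def lift_def yy hat_spread[OF L] ambient_def)
qed

lemma pimap_lift:
  "L \<subseteq> PN N \<Longrightarrow> y \<in> ambient (N - card L) \<Longrightarrow> pimap N (lift N L y) = pimap (N - card L) y"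
  using pimap_proj[of L N "lift N L y"] by (simp add: proj_lift)

lemma piL_image_eqI:
  assumes L: "L \<subseteq> PN N" and A: "A \<subseteq> ambient N" and B: "B \<subseteq> ambient (N - card L)"
    and proj: "\<And>x. x \<in> A \<Longrightarrow> proj N L x \<in> B" and lift: "\<And>y. y \<in> B \<Longrightarrow> lift N L y \<in> A"
  shows "piL N L ` A = B"
proof
  show "piL N L ` A \<subseteq> B" using A proj piL_eq_proj[OF L] by auto
  show "B \<subseteq> piL N L ` A"
  proof
    fix y assume y: "y \<in> B"
    then have "y = piL N L (lift N L y)"
      using B proj_lift[OF L, of y] piL_eq_proj[OF L lift_in_ambient[OF L]] by auto
    then show "y \<in> piL N L ` A" using lift[OF y] by blast
  qed
qed

lemma proj_in_DD:
  assumes L: "L \<subseteq> PN N" and x: "x \<in> DD N"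
  shows "proj N L x \<in> DD (N - card L)"
proof -
  obtain w a \<theta> where xx: "x = (w, a, \<theta>)" by (cases x)
  have "hat N L \<theta> k \<notin> \<int>" if "k \<in> PN (N - card L)" "hat N L a k = 0" for k
    using that x phi_in_PN_Diff[OF L that(1)] by (auto simp: hat_def DD_def xx preimg_def)
  then show ?thesis using proj_in_ambient[of N L x] by (auto simp: DD_def preimg_def proj_def xx)
qed

lemma lift_in_DD:
  assumes L: "L \<subseteq> PN N" and "y \<in> DD (N - card L)"
  shows "lift N L y \<in> DD N"
proof -
  obtain w b \<eta> where y: "y = (w, b, \<eta>)" "(w, b, \<eta>) \<in> DD (N - card L)"
    using assms(2) by (cases y) auto
  have "spread N L \<eta> (1/2) j \<notin> \<int>" if j: "j \<in> PN N" "spread N L b 0 j = 0" for j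
    using L j(1)
  proof (cases rule: PN_cases_phi)
    case 1
    then show ?thesis using fraction_not_in_Ints[where 'a = real, of 2 1] by (simp add: spread_in)
  next
    case (2 k)
    then show ?thesis using y j(2) by (auto simp: spread_phi[OF L] DD_def preimg_def)
  qed
  then show ?thesis using lift_in_ambient[OF L] by (auto simp: DD_def preimg_def lift_def y(1))
qed

lemma proj_in_Dcal:
  assumes L: "L \<subseteq> PN N" and x: "x \<in> Dcal N"
  shows "proj N L x \<in> Dcal (N - card L)"
  using x proj_in_DD[OF L] pimap_proj[OF L, of x] phi_in_PN_Diff[OF L]
  by (fastforce simp: Dcal_def proj_def hat_def)

lemma lift_in_Dcal:
  assumes L: "L \<subseteq> PN N" and "y \<in> Dcal (N - card L)"
  shows "lift N L y \<in> Dcal N"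
proof -
  obtain w b \<eta> where yy: "y = (w, b, \<eta>)" and y: "(w, b, \<eta>) \<in> Dcal (N - card L)"
    using assms(2) by (cases y) auto
  have "\<not> (Re (spread N L b 0 j) = 0 \<and> Im (spread N L b 0 j) \<noteq> 0)" if j: "j \<in> PN N" for j
    using L j
    by (cases rule: PN_cases_phi) (use y in \<open>auto simp: spread_in spread_phi[OF L] Dcal_def\<close>)
  moreover have "pimap N (lift N L y) = pimap (N - card L) y"
    using assms(2) Dcal_subset_DD DD_subset_ambient by (intro pimap_lift[OF L]) auto
  ultimately show ?thesis
    using assms(2) lift_in_DD[OF L] Dcal_subset_DD by (auto simp: Dcal_def lift_def yy)
qed

lemma uminus_Ccone_iff: "z \<in> uminus ` Ccone \<longleftrightarrow> Re z < 0 \<or> (Re z = 0 \<and> Im z < 0)"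
  unfolding Ccone_def by (auto intro: image_eqI[where x = "-z"])

lemma Re_pimap: "Re (pimap N x) = Re (fst x) - (\<Sum>l\<in>PN N. min (Re (fst (snd x) l)) 0)"
proof -
  obtain w a \<theta> where xx: "x = (w, a, \<theta>)" by (cases x)
  have "Re (pimap N x) = Re w - (\<Sum>l\<in>preimg N a (uminus ` Ccone). Re (a l))"
    by (simp add: pimap_def xx Tr_def)
  also have "(\<Sum>l\<in>preimg N a (uminus ` Ccone). Re (a l)) =
     (\<Sum>l\<in>PN N. if a l \<in> uminus ` Ccone then Re (a l) else 0)"
    unfolding preimg_def by (simp add: sum.inter_filter)
  also have "\<dots> = (\<Sum>l\<in>PN N. min (Re (a l)) 0)"
    by (intro sum.cong refl) (auto simp: uminus_Ccone_iff)
  finally show ?thesis by (simp add: xx)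
qed

lemma continuous_on_coord:
  "continuous_on S (\<lambda>x :: point. fst (snd x) l)"
  by (rule continuous_on_product_then_coordinatewise) (intro continuous_intros)

lemma continuous_on_Re_pimap: "continuous_on S (\<lambda>x. Re (pimap N x))"
  unfolding Re_pimap by (intro continuous_intros continuous_on_coord)

lemma continuous_on_hat:
  assumes "continuous_on S f"
  shows "continuous_on S (\<lambda>x. hat N L (f x :: nat \<Rightarrow> 'a::{zero,topological_space}))"
proof (rule continuous_on_coordinatewise_then_product)
  fix k
  show "continuous_on S (\<lambda>x. hat N L (f x) k)"
    using continuous_on_product_then_coordinatewise[OF assms]
    by (cases "k \<in> PN (N - card L)") (simp_all add: hat_def)
qed

text \<open>On \<open>\<D>_N\<close> a coordinate with \<open>Re (a l) = 0\<close> vanishes, so the jump of the indicator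
  of \<open>-\<C>\<close> along the imaginary axis is invisible there.\<close>
lemma continuous_on_proj_Dcal:
  assumes L: "L \<subseteq> PN N"
  shows "continuous_on (Dcal N) (proj N L)"
proof -
  let ?neg = "\<lambda>x l. if Re (fst (snd x) l) \<le> 0 then fst (snd x) l else 0"
  have eq: "proj N L x = (fst x - (\<Sum>l\<in>L. ?neg x l), hat N L (fst (snd x)), hat N L (snd (snd x)))"
    if x: "x \<in> Dcal N" for x
  proof -
    obtain w a \<theta> where xx: "x = (w, a, \<theta>)" by (cases x)
    have "finite L" using finite_subset[OF L finite_PN] .
    then have "Tr a (L \<inter> preimg N a (uminus ` Ccone))
        = (\<Sum>l\<in>L. if a l \<in> uminus ` Ccone then a l else 0)"
      using L sum.inter_filter[of L a]
      by (simp add: Tr_def preimg_def Collect_conj_eq Int_assoc[symmetric] Int_absorb2)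
    also have "\<dots> = (\<Sum>l\<in>L. ?neg x l)"
    proof (intro sum.cong refl)
      fix l
      have "Re (a l) = 0 \<Longrightarrow> a l = 0" using Dcal_Re_eq_0_imp_eq_0 x by (simp add: xx)
      then show "(if a l \<in> uminus ` Ccone then a l else 0) = ?neg x l"
        by (auto simp: xx uminus_Ccone_iff)
    qed
    finally show ?thesis by (simp add: proj_def xx)
  qed
  have neg: "continuous_on (Dcal N) (\<lambda>x. ?neg x l)" for l
  proof (rule continuous_on_cases_le)
    show "continuous_on (Dcal N) (\<lambda>x. Re (fst (snd x) l))"
      by (intro continuous_on_Re continuous_on_coord)
    show "fst (snd x) l = 0" if "x \<in> Dcal N" "Re (fst (snd x) l) = 0" for x
      using that Dcal_Re_eq_0_imp_eq_0 by (cases x) auto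
  qed (simp_all add: continuous_on_coord)
  have "continuous_on (Dcal N)
      (\<lambda>x. (fst x - (\<Sum>l\<in>L. ?neg x l), hat N L (fst (snd x)), hat N L (snd (snd x))))"
    by (intro continuous_on_Pair continuous_on_diff continuous_on_sum continuous_on_hat
        continuous_on_fst continuous_on_snd continuous_on_id neg)
  then show ?thesis by (rule continuous_on_eq) (simp add: eq)
qed

lemma Re_pimap_image_DD: "(\<lambda>x. Re (pimap N x)) ` DD N = UNIV"
proof -
  have "r \<in> (\<lambda>x. Re (pimap N x)) ` DD N" for r
  proof (rule image_eqI)
    let ?x = "(complex_of_real r, \<lambda>_. 0, \<lambda>j. if j \<in> PN N then 1/2 else 0)"
    show "r = Re (pimap N ?x)" by (simp add: Re_pimap)
    show "?x \<in> DD N"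
      using fraction_not_in_Ints[where 'a = real, of 2 1] by (auto simp: DD_def ambient_def preimg_def)
  qed
  then show ?thesis by blast
qed

definition Dopen :: "nat \<Rightarrow> point set" where
  "Dopen M = {x \<in> ambient M. (\<forall>k\<in>PN M. Re (fst (snd x) k) \<noteq> 0) \<and> Re (pimap M x) > 0}"

lemma Dopen_eq: "Dopen M = {x \<in> Dcal M. \<forall>k\<in>PN M. Re (fst (snd x) k) \<noteq> 0}"
  by (auto simp: Dopen_def Dcal_def DD_def preimg_def)

lemma openin_Dopen: "openin (top_of_set (ambient M)) (Dopen M)"
proof -
  have "open {x :: point. Re (fst (snd x) k) \<noteq> 0}" for k
    by (intro open_Collect_neq continuous_on_Re continuous_on_coord continuous_on_const)
  moreover have "open {x. 0 < Re (pimap M x)}"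
    by (intro open_Collect_less continuous_on_const continuous_on_Re_pimap)
  ultimately have "open ((\<Inter>k\<in>PN M. {x. Re (fst (snd x) k) \<noteq> 0}) \<inter> {x. 0 < Re (pimap M x)})"
    by (intro open_Int open_INT finite_PN ballI)
  moreover have "Dopen M
      = ambient M \<inter> ((\<Inter>k\<in>PN M. {x. Re (fst (snd x) k) \<noteq> 0}) \<inter> {x. 0 < Re (pimap M x)})"
    by (auto simp: Dopen_def)
  ultimately show ?thesis by (simp add: openin_open_Int)
qed

text \<open>A vanishing coordinate can be pushed onto the punctured imaginary axis, which leaves \<open>\<D>_M\<close>.\<close>
lemma Dint_Re_neq_0:
  assumes x: "(w, b, \<eta>) \<in> Dint M" and k: "k \<in> PN M"
  shows "Re (b k) \<noteq> 0"
proof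
  assume "Re (b k) = 0"
  obtain T where T: "openin (top_of_set (ambient M)) T" "(w, b, \<eta>) \<in> T" "T \<subseteq> Dcal M"
    using x unfolding Dint_def interior_of_def by auto
  then obtain U where U: "open U" "T = U \<inter> ambient M" by (auto simp: openin_open)
  have "b k = 0" using T \<open>Re (b k) = 0\<close> Dcal_Re_eq_0_imp_eq_0 by blast
  define g where "g t = (w, b(k := \<i> * complex_of_real t), \<eta>)" for t :: real
  have "continuous_on UNIV g"
    unfolding g_def
  proof (intro continuous_on_Pair continuous_on_const continuous_on_coordinatewise_then_product)
    fix j
    show "continuous_on UNIV (\<lambda>t. (b(k := \<i> * complex_of_real t)) j)"
      by (cases "j = k") (simp_all, intro continuous_intros)
  qed
  then have "open (g -` U)" using U(1) by (rule open_vimage[rotated])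
  moreover have "0 \<in> g -` U" using T U \<open>b k = 0\<close> by (simp add: g_def fun_upd_idem)
  ultimately obtain e where e: "e > 0" "ball 0 e \<subseteq> g -` U" by (meson openE)
  moreover have "e/2 \<in> ball 0 e" using e by (simp add: dist_real_def)
  ultimately have "g (e/2) \<in> U" by blast
  moreover have "g (e/2) \<in> ambient M" using T k by (auto simp: g_def Dcal_def DD_def ambient_def)
  ultimately have "g (e/2) \<in> Dcal M" using T U by auto
  then show False using k e by (auto simp: g_def Dcal_def)
qed

lemma Dint_eq_Dopen: "Dint M = Dopen M"
proof
  have "Dopen M \<subseteq> Dcal M" by (simp add: Dopen_eq)
  then show "Dopen M \<subseteq> Dint M"
    unfolding Dint_def using openin_Dopen by (rule interior_of_maximal)
  show "Dint M \<subseteq> Dopen M"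
  proof
    fix x assume x: "x \<in> Dint M"
    obtain w b \<eta> where xx: "x = (w, b, \<eta>)" by (cases x)
    have "x \<in> Dcal M" using x interior_of_subset[of _ "Dcal M"] unfolding Dint_def by blast
    moreover have "\<forall>k\<in>PN M. Re (b k) \<noteq> 0" using Dint_Re_neq_0[of w b \<eta> M] x xx by blast
    ultimately show "x \<in> Dopen M" by (simp add: Dopen_eq xx)
  qed
qed

lemma proj_in_Dopen:
  assumes L: "L \<subseteq> PN N" and x: "x \<in> {(w, a, \<theta>) \<in> Dcal N. preimg N a {0} = L}"
  shows "proj N L x \<in> Dopen (N - card L)"
proof -
  obtain w a \<theta> where xx: "x = (w, a, \<theta>)" and "(w, a, \<theta>) \<in> Dcal N" "preimg N a {0} = L"
    using x by auto
  have "Re (hat N L a k) \<noteq> 0" if k: "k \<in> PN (N - card L)" for k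
  proof
    assume "Re (hat N L a k) = 0"
    then have "a (phi N L k) = 0"
      using k Dcal_Re_eq_0_imp_eq_0[OF \<open>(w, a, \<theta>) \<in> Dcal N\<close>] by (simp add: hat_def)
    then show False
      using \<open>preimg N a {0} = L\<close> phi_in_PN_Diff[OF L k] by (auto simp: preimg_def)
  qed
  moreover have "proj N L x \<in> Dcal (N - card L)"
    using proj_in_Dcal[OF L] \<open>(w, a, \<theta>) \<in> Dcal N\<close> by (simp add: xx)
  ultimately show ?thesis by (simp add: Dopen_eq proj_def xx)
qed

lemma lift_in_zero_set:
  assumes L: "L \<subseteq> PN N" and y: "y \<in> Dopen (N - card L)"
  shows "lift N L y \<in> {(w, a, \<theta>) \<in> Dcal N. preimg N a {0} = L}"
proof -
  obtain w b \<eta> where yy: "y = (w, b, \<eta>)" by (cases y)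
  have "spread N L b 0 j = 0 \<longleftrightarrow> j \<in> L" if j: "j \<in> PN N" for j
    using L j
  proof (cases rule: PN_cases_phi)
    case 1
    then show ?thesis by (simp add: spread_in)
  next
    case (2 k)
    then have "Re (b k) \<noteq> 0" using y by (simp add: Dopen_eq yy)
    then show ?thesis using 2 phi_in_PN_Diff[OF L 2(1)] by (auto simp: spread_phi[OF L])
  qed
  then have "preimg N (spread N L b 0) {0} = L" using L by (auto simp: preimg_def)
  moreover have "lift N L y \<in> Dcal N" using lift_in_Dcal[OF L] y by (simp add: Dopen_eq)
  ultimately show ?thesis by (simp add: lift_def yy)
qed

theorem proposition4:
  fixes N :: nat and L :: "nat set"
  assumes "L \<subseteq> PN N"
  shows "(\<forall>l. l \<subseteq> PN (N - card L) \<longrightarrow>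
            (\<forall>x\<in>DD N. piL (N - card L) l (piL N L x) = piL N (phi N L ` l \<union> L) x))
       \<and> piL N L ` DD N = DD (N - card L)
       \<and> continuous_on (Dcal N) (piL N L)
       \<and> piL N L ` Dcal N = Dcal (N - card L)
       \<and> piL N L ` {(w, a, \<theta>) \<in> Dcal N. preimg N a {0} = L} = Dint (N - card L)
       \<and> continuous_on (DD N) (\<lambda>x. Re (pimap N x))
       \<and> (\<lambda>x. Re (pimap N x)) ` DD N = UNIV"
proof (intro conjI allI impI ballI)
  note L = assms
  have Dcal_ambient: "Dcal n \<subseteq> ambient n" for n
    using Dcal_subset_DD DD_subset_ambient by blast
  show "piL (N - card L) l (piL N L x) = piL N (phi N L ` l \<union> L) x"
    if "l \<subseteq> PN (N - card L)" "x \<in> DD N" for l x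
    using piL_piL[OF L] DD_subset_ambient that by blast
  show "piL N L ` DD N = DD (N - card L)"
    using DD_subset_ambient proj_in_DD[OF L] lift_in_DD[OF L] by (intro piL_image_eqI[OF L])
  show "continuous_on (Dcal N) (piL N L)"
    by (rule continuous_on_eq[OF continuous_on_proj_Dcal[OF L]])
      (simp add: piL_eq_proj[OF L] Dcal_ambient[THEN subsetD])
  show "piL N L ` Dcal N = Dcal (N - card L)"
    using Dcal_ambient proj_in_Dcal[OF L] lift_in_Dcal[OF L] by (intro piL_image_eqI[OF L])
  show "piL N L ` {(w, a, \<theta>) \<in> Dcal N. preimg N a {0} = L} = Dint (N - card L)"
    unfolding Dint_eq_Dopen
    using Dcal_ambient proj_in_Dopen[OF L] lift_in_zero_set[OF L]
    by (intro piL_image_eqI[OF L]) (auto simp: Dopen_eq)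
  show "continuous_on (DD N) (\<lambda>x. Re (pimap N x))" by (rule continuous_on_Re_pimap)
  show "(\<lambda>x. Re (pimap N x)) ` DD N = UNIV" by (rule Re_pimap_image_DD)
qed

end
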